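(* Let $I\subset K[x_1,\ldots,x_n]$ be a monomial ideal which is componentwise polymatroidal with strong exchange property. Then $I$ has linear quotients.
   Context: $G(I)$ = minimal monomial generating set; $\deg_{x_i}(u)$ = exponent of $x_i$ in $u$. A monomial ideal generated in a single degree is polymatroidal if for all $u,v\in G(I)$ and all $i$ with $\deg_{x_i}(u)>\deg_{x_i}(v)$ there exists $j$ with $\deg_{x_j}(u)<\deg_{x_j}(v)$ and $x_j(u/x_i)\in I$. A polymatroidal ideal $I$ satisfies the strong exchange property if for all $u,v\in G(I)$ and all $i,j$ with $\deg_{x_i}(u)>\deg_{x_i}(v)$ and $\deg_{x_j}(u)<\deg_{x_j}(v)$, one has $x_j(u/x_i)\in I$. $I_{\langle j\rangle}$ is the ideal generated by all degree-$j$ monomials in $I$; $I$ is componentwise polymatroidal with strong exchange property if every nonzero $I_{\langle j\rangle}$ is polymatroidal with the strong exchange property. A monomial ideal has linear quotients if there is an ordering $v_1,\ldots,v_r$ of $G(I)$ such that each $(v_1,\ldots,v_{i-1}):v_i$, $i\ge 2$, is generated by a subset of the variables. *)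

theory Defs
  imports Main
begin

text \<open>Monomials in K[x_0,...,x_{n-1}] are represented by exponent vectors
  u :: nat \<Rightarrow> nat with u i = 0 for i \<ge> n.  A monomial ideal I is represented by
  the set of monomials it contains (which determines it, since I is spanned over K by them).\<close>

type_synonym monomial = "nat \<Rightarrow> nat"

definition mons :: "nat \<Rightarrow> monomial set" where
  "mons n = {u. \<forall>i\<ge>n. u i = 0}"

definition mmul :: "monomial \<Rightarrow> monomial \<Rightarrow> monomial" where
  "mmul u v = (\<lambda>i. u i + v i)"

definition mdvd :: "monomial \<Rightarrow> monomial \<Rightarrow> bool" where
  "mdvd u v \<longleftrightarrow> (\<forall>i. u i \<le> v i)"

definition mdeg :: "nat \<Rightarrow> monomial \<Rightarrow> nat" where
  "mdeg n u = (\<Sum>i<n. u i)"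

definition mulvar :: "nat \<Rightarrow> monomial \<Rightarrow> monomial" where
  "mulvar j u = u(j := Suc (u j))"

definition divvar :: "nat \<Rightarrow> monomial \<Rightarrow> monomial" where
  "divvar i u = u(i := u i - 1)"

definition monomial_ideal :: "nat \<Rightarrow> monomial set \<Rightarrow> bool" where
  "monomial_ideal n M \<longleftrightarrow> M \<subseteq> mons n \<and> (\<forall>u\<in>M. \<forall>w\<in>mons n. mmul u w \<in> M)"

definition gens :: "monomial set \<Rightarrow> monomial set" where
  "gens M = {u\<in>M. \<forall>v\<in>M. mdvd v u \<longrightarrow> v = u}"

definition comp :: "nat \<Rightarrow> monomial set \<Rightarrow> nat \<Rightarrow> monomial set" where
  "comp n M j = {w\<in>mons n. \<exists>u\<in>M. mdeg n u = j \<and> mdvd u w}"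

definition polymatroidal :: "nat \<Rightarrow> monomial set \<Rightarrow> bool" where
  "polymatroidal n M \<longleftrightarrow>
     (\<exists>d. \<forall>u\<in>gens M. mdeg n u = d) \<and>
     (\<forall>u\<in>gens M. \<forall>v\<in>gens M. \<forall>i<n. u i > v i \<longrightarrow>
        (\<exists>j<n. u j < v j \<and> mulvar j (divvar i u) \<in> M))"

definition strong_exchange :: "nat \<Rightarrow> monomial set \<Rightarrow> bool" where
  "strong_exchange n M \<longleftrightarrow> polymatroidal n M \<and>
     (\<forall>u\<in>gens M. \<forall>v\<in>gens M. \<forall>i<n. \<forall>j<n. u i > v i \<longrightarrow> u j < v j \<longrightarrow>
        mulvar j (divvar i u) \<in> M)"

definition componentwise_polymatroidal_sep :: "nat \<Rightarrow> monomial set \<Rightarrow> bool" where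
  "componentwise_polymatroidal_sep n M \<longleftrightarrow>
     (\<forall>j. comp n M j \<noteq> {} \<longrightarrow> strong_exchange n (comp n M j))"

text \<open>monomials of the colon ideal (v_0,...,v_{k-1}) : v_k\<close>
definition colon_prefix :: "nat \<Rightarrow> monomial list \<Rightarrow> nat \<Rightarrow> monomial set" where
  "colon_prefix n vs k = {w\<in>mons n. \<exists>l<k. mdvd (vs ! l) (mmul w (vs ! k))}"

definition var_ideal :: "nat \<Rightarrow> nat set \<Rightarrow> monomial set" where
  "var_ideal n S = {w\<in>mons n. \<exists>j\<in>S. w j \<ge> 1}"

definition linear_quotients :: "nat \<Rightarrow> monomial set \<Rightarrow> bool" where
  "linear_quotients n M \<longleftrightarrow>
     (\<exists>vs. distinct vs \<and> set vs = gens M \<and>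
        (\<forall>k. 0 < k \<and> k < length vs \<longrightarrow>
           (\<exists>S\<subseteq>{..<n}. colon_prefix n vs k = var_ideal n S)))"

end

(*
  Order the minimal generators by degree; within degree d, put first the generators v with larger
  max_overlap d v, the largest degree of gcd(v, g) over the degree-(d - 1) monomials g of I, and
  break the remaining ties lexicographically.  Given a generator v and an earlier generator b, the
  degree-d component yields a monomial u of degree d dividing lcm(b, v) that precedes v.  Strong
  exchanges in the degree-d and degree-(d - 1) components, each of which either succeeds or moves u
  strictly closer to v, then produce a variable x_i dividing b / gcd(b, v) and an index j such that
  x_i v / x_j precedes v.  That monomial is divisible by an earlier generator, so x_i lies in the
  colon ideal, which is therefore generated by variables.
*)
theory Submission
  imports Defs "HOL-Library.List_Lexorder" "HOL-Library.Product_Lexorder"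
begin

lemma mons_zero: "u \<in> mons n \<Longrightarrow> n \<le> i \<Longrightarrow> u i = 0"
  by (simp add: mons_def)

lemma mdvd_refl [simp]: "mdvd u u"
  by (simp add: mdvd_def)

lemma mdvd_trans: "mdvd a b \<Longrightarrow> mdvd b c \<Longrightarrow> mdvd a c"
  unfolding mdvd_def using le_trans by blast

lemma mdvd_mons: "mdvd a b \<Longrightarrow> b \<in> mons n \<Longrightarrow> a \<in> mons n"
  unfolding mdvd_def mons_def by (simp, metis le_0_eq)

lemma mdvd_mulvar: "mdvd u (mulvar i u)"
  by (simp add: mdvd_def mulvar_def)

lemma mdeg_mono: "mdvd a b \<Longrightarrow> mdeg n a \<le> mdeg n b"
  unfolding mdeg_def mdvd_def by (simp add: sum_mono)

lemma coord_le_mdeg: "i < n \<Longrightarrow> u i \<le> mdeg n u"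
  unfolding mdeg_def by (rule member_le_sum) auto

lemma mdvd_mdeg_eq_imp_eq:
  assumes "mdvd a b" "b \<in> mons n" "mdeg n a = mdeg n b"
  shows "a = b"
proof
  fix i
  show "a i = b i"
  proof (cases "i < n")
    case True
    then show ?thesis
      using assms(1,3) by (intro sum_mono_inv[of a "{..<n}" b]) (auto simp: mdeg_def mdvd_def)
  next
    case False
    then show ?thesis using assms(1,2) mdvd_mons[OF assms(1,2)] by (simp add: mons_def)
  qed
qed

lemma mdeg_less_if_mdvd:
  "mdvd a b \<Longrightarrow> b \<in> mons n \<Longrightarrow> a \<noteq> b \<Longrightarrow> mdeg n a < mdeg n b"
  using mdvd_mdeg_eq_imp_eq mdeg_mono le_neq_implies_less by metis

lemma mdeg_eq_ex_less:
  assumes "a \<in> mons n" "b \<in> mons n" "mdeg n a = mdeg n b" "a \<noteq> b"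
  shows "\<exists>j<n. a j < b j"
proof (rule ccontr)
  assume "\<not> ?thesis"
  then have "b i \<le> a i" for i
    using assms(2) by (cases "i < n") (auto simp: mons_def not_less)
  then have "mdvd b a" by (simp add: mdvd_def)
  then show False using mdvd_mdeg_eq_imp_eq assms by metis
qed

lemma mdeg_upd: "k < n \<Longrightarrow> mdeg n (u(k := x)) + u k = mdeg n u + x"
  unfolding mdeg_def
  by (simp add: sum.remove[of "{..<n}" k])

lemma mdeg_mulvar: "i < n \<Longrightarrow> mdeg n (mulvar i u) = Suc (mdeg n u)"
  using mdeg_upd[of i n u "Suc (u i)"] by (simp add: mulvar_def)

lemma mdeg_divvar: "i < n \<Longrightarrow> 0 < u i \<Longrightarrow> Suc (mdeg n (divvar i u)) = mdeg n u"
  using mdeg_upd[of i n u "u i - 1"] by (simp add: divvar_def)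

lemma mdvd_interpolate:
  assumes "mdvd a c" "c \<in> mons n" "mdeg n a \<le> t" "t \<le> mdeg n c"
  shows "\<exists>u. mdvd a u \<and> mdvd u c \<and> mdeg n u = t"
  using assms
proof (induction "mdeg n c - t" arbitrary: c)
  case 0
  then show ?case by (intro exI[of _ c]) auto
next
  case (Suc x)
  then have "a \<noteq> c" by auto
  then obtain k where k: "a k < c k"
    using Suc.prems(1) unfolding mdvd_def by (metis le_neq_implies_less ext)
  have "k < n" using k Suc.prems(2) mons_zero by (metis not_less not_less0)
  define c' where "c' = divvar k c"
  have deg: "Suc (mdeg n c') = mdeg n c"
    unfolding c'_def using mdeg_divvar[OF \<open>k < n\<close>] k by simp
  have "mdvd a c'" "mdvd c' c" "c' \<in> mons n"
    using Suc.prems(1,2) k unfolding c'_def mdvd_def divvar_def mons_def by auto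
  moreover have "x = mdeg n c' - t" "t \<le> mdeg n c'"
    using Suc.hyps(2) deg by arith+
  ultimately obtain u where "mdvd a u" "mdvd u c'" "mdeg n u = t"
    using Suc.hyps(1) Suc.prems(3) by blast
  then show ?case using \<open>mdvd c' c\<close> mdvd_trans by blast
qed

definition exch :: "nat \<Rightarrow> nat \<Rightarrow> monomial \<Rightarrow> monomial" where
  "exch i j u = mulvar j (divvar i u)"

lemma exch_apply:
  "i \<noteq> j \<Longrightarrow> exch i j u k = (if k = j then Suc (u j) else if k = i then u i - 1 else u k)"
  by (auto simp: exch_def mulvar_def divvar_def)

lemma mdeg_exch: "i < n \<Longrightarrow> j < n \<Longrightarrow> 0 < u i \<Longrightarrow> mdeg n (exch i j u) = mdeg n u"
  by (simp add: exch_def mdeg_mulvar mdeg_divvar)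

lemma mdvd_exch_mulvar: "mdvd (exch j i v) (mulvar i v)"
  by (cases "i = j") (auto simp: mdvd_def exch_def mulvar_def divvar_def)

section \<open>Antichains of monomials are finite\<close>

lemma mdvd_zero_coordinate_iff:
  "b i = b' i \<Longrightarrow> mdvd (b(i := 0)) (b'(i := 0)) \<longleftrightarrow> mdvd b b'"
  unfolding mdvd_def by (metis fun_upd_apply order_refl)

lemma inj_on_zero_coordinate: "inj_on (\<lambda>b. b(i := 0)) {b. b i = c}"
proof (rule inj_onI, rule ext)
  fix b b' t assume "b \<in> {b. b i = c}" "b' \<in> {b. b i = c}" "b(i := 0) = b'(i := 0)"
  then show "b t = b' t" by (cases "t = i") (auto dest: fun_cong[where x = t])
qed

lemma antichain_covered_by_fibers:
  assumes "a \<in> A" "\<And>a i. a \<in> A \<Longrightarrow> i \<notin> S \<Longrightarrow> a i = 0"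
    and "\<And>a b. a \<in> A \<Longrightarrow> b \<in> A \<Longrightarrow> mdvd a b \<Longrightarrow> a = b"
  shows "A \<subseteq> insert a (\<Union>i\<in>S. \<Union>c<a i. {b \<in> A. b i = c})"
proof
  fix b assume b: "b \<in> A"
  show "b \<in> insert a (\<Union>i\<in>S. \<Union>c<a i. {b \<in> A. b i = c})"
  proof (cases "b = a")
    case False
    then have "\<not> mdvd a b" using assms(1,3) b by blast
    then obtain i where "b i < a i" unfolding mdvd_def by (auto simp: not_le)
    moreover then have "i \<in> S" using assms(1,2) by fastforce
    ultimately show ?thesis using b by auto
  qed simp
qed

lemma finite_antichain_supported:
  assumes "finite S" "\<And>a i. a \<in> A \<Longrightarrow> i \<notin> S \<Longrightarrow> a i = 0"
    and "\<And>a b. a \<in> A \<Longrightarrow> b \<in> A \<Longrightarrow> mdvd a b \<Longrightarrow> a = b"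
  shows "finite A"
  using assms
proof (induction "card S" arbitrary: S A rule: less_induct)
  case less
  have "finite {b \<in> A. b i = c}" if "i \<in> S" for i c
  proof -
    let ?F = "{b \<in> A. b i = c}"
    have "finite ((\<lambda>b. b(i := 0)) ` ?F)"
    proof (rule less.hyps[of "S - {i}"])
      show "card (S - {i}) < card S"
        using that less.prems(1) by (rule card_Diff1_less[rotated])
      fix x y assume "x \<in> (\<lambda>b. b(i := 0)) ` ?F" "y \<in> (\<lambda>b. b(i := 0)) ` ?F" "mdvd x y"
      then obtain b b' where b: "b \<in> ?F" "b' \<in> ?F" "x = b(i := 0)" "y = b'(i := 0)" by blast
      then have "mdvd b b'" using mdvd_zero_coordinate_iff[of b i b'] \<open>mdvd x y\<close> by simp
      then show "x = y" using less.prems(3) b by blast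
    qed (use less.prems in auto)
    moreover have "inj_on (\<lambda>b. b(i := 0)) ?F"
      using inj_on_zero_coordinate[of i c] by (rule inj_on_subset) auto
    ultimately show ?thesis using finite_imageD by blast
  qed
  note fibers = this
  show ?case
  proof (cases "A = {}")
    case False
    then obtain a where a: "a \<in> A" by auto
    have "A \<subseteq> insert a (\<Union>i\<in>S. \<Union>c<a i. {b \<in> A. b i = c})"
      using a by (rule antichain_covered_by_fibers) (use less.prems in auto)
    moreover have "finite (insert a (\<Union>i\<in>S. \<Union>c<a i. {b \<in> A. b i = c}))"
      using fibers less.prems(1) by auto
    ultimately show ?thesis by (rule finite_subset)
  qed simp
qed

lemma finite_antichain:
  assumes "A \<subseteq> mons n" "\<And>a b. a \<in> A \<Longrightarrow> b \<in> A \<Longrightarrow> mdvd a b \<Longrightarrow> a = b"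
  shows "finite A"
  using assms by (intro finite_antichain_supported[of "{..<n}"]) (auto simp: mons_def)

definition excess :: "nat \<Rightarrow> monomial \<Rightarrow> monomial \<Rightarrow> nat" where
  "excess n a b = (\<Sum>k<n. a k - b k)"

lemma excess_exch_less:
  assumes "k < n" "m < n" "a k < b k" "b m < a m"
  shows "excess n (exch m k a) b < excess n a b"
  unfolding excess_def
proof (rule sum_strict_mono_ex1)
  have "k \<noteq> m" using assms by auto
  then show "\<forall>t\<in>{..<n}. exch m k a t - b t \<le> a t - b t"
    using assms by (auto simp: exch_apply)
  show "\<exists>t\<in>{..<n}. exch m k a t - b t < a t - b t"
    using assms \<open>k \<noteq> m\<close> by (intro bexI[of _ m]) (auto simp: exch_apply)
qed simp

definition mgcd :: "monomial \<Rightarrow> monomial \<Rightarrow> monomial" where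
  "mgcd g a = (\<lambda>k. min (g k) (a k))"

lemma mgcd_commute: "mgcd g a = mgcd a g"
  by (auto simp: mgcd_def)

lemma mdvd_mgcd: "mdvd (mgcd g a) g"
  by (simp add: mdvd_def mgcd_def)

lemma mgcd_eq_iff_mdvd: "mgcd g a = g \<longleftrightarrow> mdvd g a"
  by (auto simp: mgcd_def mdvd_def fun_eq_iff min_def)

lemma mdeg_mgcd_less:
  "g \<in> mons n \<Longrightarrow> \<not> mdvd g a \<Longrightarrow> mdeg n (mgcd g a) < mdeg n g"
  by (metis mdeg_less_if_mdvd mdvd_mgcd mgcd_eq_iff_mdvd)

lemma mdeg_mgcd_exch_right:
  assumes "i < n" "j < n" "i \<noteq> j" "g j < a j"
  shows "mdeg n (mgcd g (exch j i a)) = mdeg n (mgcd g a) + (if a i < g i then 1 else 0)"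
proof -
  have "mgcd g (exch j i a) = (mgcd g a)(i := min (g i) (Suc (a i)))"
    using assms by (auto simp: mgcd_def exch_apply fun_eq_iff)
  then show ?thesis
    using mdeg_upd[OF assms(1), of "mgcd g a" "min (g i) (Suc (a i))"] by (auto simp: mgcd_def)
qed

lemma mgcd_exch_exch:
  "0 < g j \<Longrightarrow> 0 < a j \<Longrightarrow> mgcd (exch j i g) (exch j i a) = exch j i (mgcd g a)"
  by (cases "i = j") (auto simp: mgcd_def exch_def mulvar_def divvar_def fun_eq_iff)

lemma mdeg_mgcd_exch_exch:
  "i < n \<Longrightarrow> j < n \<Longrightarrow> 0 < g j \<Longrightarrow> 0 < a j \<Longrightarrow>
    mdeg n (mgcd (exch j i g) (exch j i a)) = mdeg n (mgcd g a)"
proof -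
  assume "i < n" "j < n" "0 < g j" "0 < a j"
  moreover then have "0 < mgcd g a j" by (simp add: mgcd_def)
  ultimately show ?thesis by (simp add: mgcd_exch_exch mdeg_exch)
qed

lemma mdeg_mgcd_exch_left_ge:
  assumes "k < n" "m < n" "k \<noteq> m" "0 < g m" "g k < v k \<or> v m < g m"
  shows "mdeg n (mgcd g v) \<le> mdeg n (mgcd (exch m k g) v)"
proof (cases "v m < g m")
  case True
  then show ?thesis
    using mdeg_mgcd_exch_right[OF assms(1-3), of v g] by (simp add: mgcd_commute)
next
  case False
  then have "mgcd (exch m k g) v = exch m k (mgcd g v)"
    using assms by (auto simp: mgcd_def exch_apply fun_eq_iff)
  moreover have "0 < mgcd g v m" using assms False by (simp add: mgcd_def)
  ultimately show ?thesis using assms by (simp add: mdeg_exch)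
qed

definition lexgt :: "nat \<Rightarrow> monomial \<Rightarrow> monomial \<Rightarrow> bool" where
  "lexgt n u v \<longleftrightarrow> (\<exists>i0<n. (\<forall>i<i0. u i = v i) \<and> v i0 < u i0)"

lemma lexgt_exch:
  assumes "i0 < n" "\<forall>i<i0. u i = v i" "v i0 < u i0" "u j < v j"
  shows "i0 < j" "lexgt n (exch j i0 v) v"
proof -
  show "i0 < j" using assms by (metis linorder_neqE_nat order.asym)
  then show "lexgt n (exch j i0 v) v"
    unfolding lexgt_def using assms(1) by (intro exI[of _ i0]) (auto simp: exch_apply)
qed

section \<open>Linear quotients from an exchange property\<close>

lemma colon_prefix_eq_var_ideal:
  assumes "k < length vs"
    and exchange: "\<And>l w. l < k \<Longrightarrow> mdvd (vs ! l) (mmul w (vs ! k)) \<Longrightarrow>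
      \<exists>i<n. 0 < w i \<and> (\<exists>l'<k. mdvd (vs ! l') (mulvar i (vs ! k)))"
  shows "colon_prefix n vs k = var_ideal n {j. j < n \<and> (\<exists>l<k. mdvd (vs ! l) (mulvar j (vs ! k)))}"
proof (intro equalityI subsetI)
  fix w assume "w \<in> colon_prefix n vs k"
  then obtain l where "w \<in> mons n" "l < k" "mdvd (vs ! l) (mmul w (vs ! k))"
    unfolding colon_prefix_def by blast
  moreover then obtain i l' where "i < n" "0 < w i" "l' < k" "mdvd (vs ! l') (mulvar i (vs ! k))"
    using exchange by blast
  ultimately show "w \<in> var_ideal n {j. j < n \<and> (\<exists>l<k. mdvd (vs ! l) (mulvar j (vs ! k)))}"
    unfolding var_ideal_def by auto
next
  fix w assume "w \<in> var_ideal n {j. j < n \<and> (\<exists>l<k. mdvd (vs ! l) (mulvar j (vs ! k)))}"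
  then obtain j l where "w \<in> mons n" "1 \<le> w j" "l < k" "mdvd (vs ! l) (mulvar j (vs ! k))"
    unfolding var_ideal_def by blast
  moreover have "mdvd (mulvar j (vs ! k)) (mmul w (vs ! k))"
    using \<open>1 \<le> w j\<close> by (auto simp: mdvd_def mulvar_def mmul_def)
  ultimately show "w \<in> colon_prefix n vs k"
    unfolding colon_prefix_def using mdvd_trans by blast
qed

lemma strictly_sorted_listing:
  fixes key :: "'a \<Rightarrow> 'k::linorder"
  assumes "finite A" "inj_on key A"
  obtains vs where "distinct vs" "set vs = A"
    "\<And>l k. l < length vs \<Longrightarrow> k < length vs \<Longrightarrow> key (vs ! l) < key (vs ! k) \<longleftrightarrow> l < k"
proof -
  obtain xs where xs: "set xs = A" "distinct xs"
    using finite_distinct_list[OF assms(1)] by blast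
  have "sorted_wrt (<) (map key (sort_key key xs))"
    using xs assms(2) by (auto simp: strict_sorted_iff distinct_map)
  then have sorted: "sorted_wrt (\<lambda>x y. key x < key y) (sort_key key xs)"
    by (simp add: sorted_wrt_map)
  have "key (sort_key key xs ! l) < key (sort_key key xs ! k) \<longleftrightarrow> l < k"
    if "l < length (sort_key key xs)" "k < length (sort_key key xs)" for l k
  proof
    assume "key (sort_key key xs ! l) < key (sort_key key xs ! k)"
    then show "l < k"
      using sorted_wrt_nth_less[OF sorted, of k l] that by (cases "k < l") (auto simp: not_less le_less)
  qed (use sorted_wrt_nth_less[OF sorted] that in blast)
  then show ?thesis using that[of "sort_key key xs"] xs by simp
qed

lemma linear_quotients_by_key:
  fixes key :: "monomial \<Rightarrow> 'k::linorder"
  assumes "finite (gens M)" "inj_on key (gens M)"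
    and exchange: "\<And>v b w. v \<in> gens M \<Longrightarrow> b \<in> gens M \<Longrightarrow> key b < key v \<Longrightarrow>
      mdvd b (mmul w v) \<Longrightarrow> \<exists>i<n. 0 < w i \<and> (\<exists>c\<in>gens M. key c < key v \<and> mdvd c (mulvar i v))"
  shows "linear_quotients n M"
proof -
  obtain vs where vs: "distinct vs" "set vs = gens M"
    and key_less_iff: "\<And>l k. l < length vs \<Longrightarrow> k < length vs \<Longrightarrow> key (vs ! l) < key (vs ! k) \<longleftrightarrow> l < k"
    using strictly_sorted_listing[OF assms(1,2)] by blast
  have exchange_index: "\<exists>i<n. 0 < w i \<and> (\<exists>l'<k. mdvd (vs ! l') (mulvar i (vs ! k)))"
    if k: "k < length vs" and l: "l < k" and dvd: "mdvd (vs ! l) (mmul w (vs ! k))" for k l w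
  proof -
    have "l < length vs" using k l by simp
    then have "vs ! k \<in> gens M" "vs ! l \<in> gens M" "key (vs ! l) < key (vs ! k)"
      using k l vs(2) key_less_iff[of l k] nth_mem by blast+
    then obtain i c where "i < n" "0 < w i" "c \<in> set vs" "key c < key (vs ! k)"
        "mdvd c (mulvar i (vs ! k))"
      using exchange dvd vs(2) by blast
    moreover then obtain l' where "l' < length vs" "c = vs ! l'"
      by (auto simp: in_set_conv_nth)
    ultimately show ?thesis
      using key_less_iff[of l' k] k by blast
  qed
  show ?thesis
    unfolding linear_quotients_def
  proof (intro exI[of _ vs] conjI allI impI)
    fix k assume "0 < k \<and> k < length vs"
    then have "colon_prefix n vs k = var_ideal n {j. j < n \<and> (\<exists>l<k. mdvd (vs ! l) (mulvar j (vs ! k)))}"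
      by (intro colon_prefix_eq_var_ideal exchange_index) auto
    then show "\<exists>S\<subseteq>{..<n}. colon_prefix n vs k = var_ideal n S"
      by (intro exI[of _ "{j. j < n \<and> (\<exists>l<k. mdvd (vs ! l) (mulvar j (vs ! k)))}"]) auto
  qed (use vs in auto)
qed

section \<open>The homogeneous components\<close>

locale componentwise_sep_ideal =
  fixes n :: nat and M :: "monomial set"
  assumes ideal: "monomial_ideal n M"
    and sep: "componentwise_polymatroidal_sep n M"
begin

definition level :: "nat \<Rightarrow> monomial set" where
  "level d = {a \<in> M. mdeg n a = d}"

definition lifted :: "nat \<Rightarrow> monomial set" where
  "lifted d = {a \<in> level d. \<exists>g\<in>level (d - 1). mdvd g a}"

definition max_overlap :: "nat \<Rightarrow> monomial \<Rightarrow> nat" where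
  "max_overlap d a = Max (insert 0 ((\<lambda>g. mdeg n (mgcd g a)) ` level (d - 1)))"

lemma M_mons: "a \<in> M \<Longrightarrow> a \<in> mons n"
  using ideal unfolding monomial_ideal_def by blast

lemma M_upward:
  assumes "a \<in> M" "mdvd a b" "b \<in> mons n"
  shows "b \<in> M"
proof -
  have "(\<lambda>k. b k - a k) \<in> mons n" "mmul a (\<lambda>k. b k - a k) = b"
    using assms(2,3) by (auto simp: mons_def mmul_def mdvd_def fun_eq_iff)
  then show ?thesis using ideal assms(1) unfolding monomial_ideal_def by metis
qed

lemma mulvar_in_M: "a \<in> M \<Longrightarrow> i < n \<Longrightarrow> mulvar i a \<in> M"
  using M_upward[OF _ mdvd_mulvar] M_mons by (auto simp: mons_def mulvar_def)

lemma level_mons: "a \<in> level d \<Longrightarrow> a \<in> mons n"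
  by (simp add: level_def M_mons)

lemma finite_level: "finite (level d)"
  by (rule finite_antichain[of _ n]) (auto simp: level_def M_mons intro!: mdvd_mdeg_eq_imp_eq[where n = n])

lemma level_in_comp: "a \<in> level d \<Longrightarrow> a \<in> comp n M d"
  by (auto simp: level_def comp_def M_mons)

lemma comp_mdeg_ge: "x \<in> comp n M d \<Longrightarrow> d \<le> mdeg n x"
  unfolding comp_def using mdeg_mono by blast

lemma comp_in_M: "x \<in> comp n M d \<Longrightarrow> x \<in> M"
  unfolding comp_def using M_upward by blast

lemma gens_comp: "gens (comp n M d) = level d"
proof (intro equalityI subsetI)
  fix a assume a: "a \<in> gens (comp n M d)"
  then obtain u where "u \<in> level d" "mdvd u a"
    unfolding gens_def comp_def level_def by blast
  moreover then have "u = a"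
    using a level_in_comp unfolding gens_def by blast
  ultimately show "a \<in> level d" by simp
next
  fix a assume a: "a \<in> level d"
  have "v = a" if "v \<in> comp n M d" "mdvd v a" for v
    using that a comp_mdeg_ge[of v d] mdeg_mono[of v a n] level_mons
    by (intro mdvd_mdeg_eq_imp_eq[where n = n]) (auto simp: level_def)
  then show "a \<in> gens (comp n M d)"
    using a level_in_comp unfolding gens_def by blast
qed

lemma level_exchange:
  assumes "a \<in> level d" "b \<in> level d" "i < n" "j < n" "b i < a i" "a j < b j"
  shows "exch i j a \<in> level d"
proof -
  have "strong_exchange n (comp n M d)"
    using sep assms(1) level_in_comp unfolding componentwise_polymatroidal_sep_def by blast
  then have "exch i j a \<in> comp n M d"
    using assms gens_comp unfolding strong_exchange_def exch_def by blast
  moreover have "mdeg n (exch i j a) = d"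
    using assms mdeg_exch[of i n j a] by (simp add: level_def)
  ultimately show ?thesis
    using comp_in_M by (simp add: level_def)
qed

lemma finite_gens: "finite (gens M)"
  by (rule finite_antichain[of _ n]) (auto simp: gens_def M_mons)

lemma gens_below:
  assumes "a \<in> M"
  obtains b where "b \<in> gens M" "mdvd b a"
proof -
  obtain b where b: "b \<in> M" "mdvd b a"
    and least: "\<And>c. c \<in> M \<Longrightarrow> mdvd c a \<Longrightarrow> mdeg n b \<le> mdeg n c"
    using ex_has_least_nat[of "\<lambda>b. b \<in> M \<and> mdvd b a" a "mdeg n"] assms by auto
  have "c = b" if "c \<in> M" "mdvd c b" for c
    using that b least[of c] mdeg_mono[OF that(2), of n] mdvd_trans M_mons
    by (intro mdvd_mdeg_eq_imp_eq[where n = n]) (auto simp: le_antisym)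
  then show ?thesis using that b unfolding gens_def by blast
qed

lemma max_overlap_ge:
  "g \<in> level (d - 1) \<Longrightarrow> mdeg n (mgcd g a) \<le> max_overlap d a"
  unfolding max_overlap_def using finite_level by (intro Max_ge) auto

lemma max_overlap_attained:
  assumes "level (d - 1) \<noteq> {}"
  obtains g where "g \<in> level (d - 1)" "mdeg n (mgcd g a) = max_overlap d a"
proof -
  have "max_overlap d a \<in> insert 0 ((\<lambda>g. mdeg n (mgcd g a)) ` level (d - 1))"
    unfolding max_overlap_def using finite_level by (intro Max_in) auto
  moreover obtain g where "g \<in> level (d - 1)" using assms by auto
  ultimately show ?thesis using that max_overlap_ge[of g d a] by fastforce
qed

lemma max_overlap_empty: "level (d - 1) = {} \<Longrightarrow> max_overlap d a = 0"
  by (simp add: max_overlap_def)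

lemma lifted_max_overlap_less:
  assumes "u \<in> lifted d" "v \<in> level d" "v \<notin> lifted d"
  shows "max_overlap d v < max_overlap d u"
proof -
  obtain g where g: "g \<in> level (d - 1)" "mdvd g u"
    using assms(1) unfolding lifted_def by blast
  then obtain g' where g': "g' \<in> level (d - 1)" "mdeg n (mgcd g' v) = max_overlap d v"
    using max_overlap_attained by blast
  have "\<not> mdvd g' v" using assms(2,3) g' unfolding lifted_def by blast
  then have "max_overlap d v < mdeg n g'"
    using g' mdeg_mgcd_less level_mons by metis
  also have "\<dots> = mdeg n (mgcd g u)"
    using g g' mgcd_eq_iff_mdvd[of g u] by (simp add: level_def)
  also have "\<dots> \<le> max_overlap d u" using max_overlap_ge g by blast
  finally show ?thesis .
qed

lemma gens_iff_level_not_lifted: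
  assumes "1 \<le> d"
  shows "a \<in> gens M \<and> mdeg n a = d \<longleftrightarrow> a \<in> level d \<and> a \<notin> lifted d"
proof
  assume a: "a \<in> gens M \<and> mdeg n a = d"
  have "g = a" if "g \<in> level (d - 1)" "mdvd g a" for g
    using a that unfolding gens_def level_def by blast
  then show "a \<in> level d \<and> a \<notin> lifted d"
    using a assms unfolding lifted_def level_def gens_def by fastforce
next
  assume a: "a \<in> level d \<and> a \<notin> lifted d"
  have "b = a" if b: "b \<in> M" "mdvd b a" for b
  proof (rule ccontr)
    assume "b \<noteq> a"
    then have "mdeg n b \<le> d - 1"
      using mdeg_less_if_mdvd[OF b(2)] a level_mons by (fastforce simp: level_def)
    then obtain u where u: "mdvd b u" "mdvd u a" "mdeg n u = d - 1"
      using mdvd_interpolate[OF b(2), where n = n and t = "d - 1"] a level_mons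
      by (fastforce simp: level_def)
    then have "u \<in> level (d - 1)"
      using M_upward[OF b(1) u(1)] mdvd_mons[OF u(2)] a level_mons by (simp add: level_def)
    then show False using a u(2) unfolding lifted_def by blast
  qed
  then show "a \<in> gens M \<and> mdeg n a = d"
    using a unfolding gens_def level_def by blast
qed

section \<open>The exchange argument\<close>

definition precedes :: "nat \<Rightarrow> monomial \<Rightarrow> monomial \<Rightarrow> bool" where
  "precedes d u v \<longleftrightarrow> u \<in> lifted d \<or> max_overlap d v < max_overlap d u
     \<or> (max_overlap d v \<le> max_overlap d u \<and> lexgt n u v)"

lemma precedes_lex_exchange:
  assumes "u \<in> level d" "v \<in> level d" "i0 < n" "\<forall>i<i0. u i = v i" "v i0 < u i0"
    and "j < n" "u j < v j" "max_overlap d v \<le> max_overlap d (exch j i0 v)"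
  shows "exch j i0 v \<in> level d" "precedes d (exch j i0 v) v"
  using level_exchange[OF assms(2,1,6,3,7,5)] lexgt_exch(2)[OF assms(3,4,5,7)] assms(8)
  by (auto simp: precedes_def)

lemma max_overlap_exch_right:
  assumes "g \<in> level (d - 1)" "mdeg n (mgcd g v) = max_overlap d v"
    and "i < n" "j < n" "i \<noteq> j" "g j < v j"
  shows "max_overlap d v + (if v i < g i then 1 else 0) \<le> max_overlap d (exch j i v)"
  using mdeg_mgcd_exch_right[of i n j g v] max_overlap_ge[OF assms(1), of "exch j i v"] assms(2-6)
  by simp

lemma max_overlap_exch_exch:
  assumes "exch j i g \<in> level (d - 1)" "i < n" "j < n" "0 < g j" "0 < a j"
  shows "mdeg n (mgcd g a) \<le> max_overlap d (exch j i a)"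
  using mdeg_mgcd_exch_exch[of i n j g a] max_overlap_ge[OF assms(1), of "exch j i a"] assms(2-5)
  by simp

lemma max_overlap_exchange_increase:
  assumes "1 \<le> d" "v \<in> level d" "g \<in> level (d - 1)" "mdeg n (mgcd g v) = max_overlap d v"
    and "i < n" "v i < g i"
  obtains j where "j < n" "exch j i v \<in> level d" "max_overlap d v < max_overlap d (exch j i v)"
proof -
  have gi: "mulvar i g \<in> level d"
    using assms mulvar_in_M mdeg_mulvar by (auto simp: level_def)
  moreover have "mulvar i g \<noteq> v"
    using assms(6) by (auto simp: mulvar_def fun_eq_iff)
  moreover have "mdeg n (mulvar i g) = mdeg n v"
    using gi assms(2) by (simp add: level_def)
  ultimately obtain j where j: "j < n" "mulvar i g j < v j"
    using mdeg_eq_ex_less level_mons[OF gi] level_mons[OF assms(2)] by blast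
  then have "i \<noteq> j" "g j < v j"
    using assms(6) by (auto simp: mulvar_def split: if_splits)
  have "exch j i v \<in> level d"
    using level_exchange[OF assms(2) gi j(1) assms(5) j(2)] assms(6) by (simp add: mulvar_def)
  moreover have "max_overlap d v < max_overlap d (exch j i v)"
    using max_overlap_exch_right[OF assms(3,4,5) j(1) \<open>i \<noteq> j\<close> \<open>g j < v j\<close>] assms(6) by simp
  ultimately show ?thesis using that j(1) by blast
qed

(* Take g closest to g0 among the maximizers: an exchange moving g towards g0 never lowers the
   overlap with v, so by minimality no such exchange is possible. *)
lemma closest_max_overlap_divisor:
  assumes "g0 \<in> level (d - 1)"
  obtains g where "g \<in> level (d - 1)" "mdeg n (mgcd g v) = max_overlap d v"
    "\<And>k m. k < n \<Longrightarrow> m < n \<Longrightarrow> g k < g0 k \<Longrightarrow> g0 m < g m \<Longrightarrow> v k \<le> g k \<and> g m \<le> v m"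
proof -
  obtain g1 where "g1 \<in> level (d - 1)" "mdeg n (mgcd g1 v) = max_overlap d v"
    using max_overlap_attained assms by blast
  then obtain g where g: "g \<in> level (d - 1)" "mdeg n (mgcd g v) = max_overlap d v"
    and least: "\<And>g'. g' \<in> level (d - 1) \<Longrightarrow> mdeg n (mgcd g' v) = max_overlap d v \<Longrightarrow>
      excess n g g0 \<le> excess n g' g0"
    using ex_has_least_nat[of "\<lambda>g. g \<in> level (d - 1) \<and> mdeg n (mgcd g v) = max_overlap d v"
        g1 "\<lambda>g. excess n g g0"] by blast
  have "v k \<le> g k \<and> g m \<le> v m"
    if km: "k < n" "m < n" "g k < g0 k" "g0 m < g m" for k m
  proof (rule ccontr)
    assume "\<not> (v k \<le> g k \<and> g m \<le> v m)"
    then have "g k < v k \<or> v m < g m" by auto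
    moreover have "k \<noteq> m" using km by auto
    ultimately have "mdeg n (mgcd g v) \<le> mdeg n (mgcd (exch m k g) v)"
      using km by (intro mdeg_mgcd_exch_left_ge) auto
    moreover have g': "exch m k g \<in> level (d - 1)"
      using level_exchange[OF g(1) assms km(2,1,4,3)] .
    ultimately have "mdeg n (mgcd (exch m k g) v) = max_overlap d v"
      using g(2) max_overlap_ge[OF g', of v] by simp
    then have "excess n g g0 \<le> excess n (exch m k g) g0"
      using least g' by blast
    then show False using excess_exch_less[OF km] by simp
  qed
  then show ?thesis using that g by blast
qed

(* Summing the pointwise bound gives max_overlap d u - max_overlap d v \<le> deg g0 - deg g = 0. *)
lemma max_overlap_tight:
  assumes "u \<in> level d" "g0 \<in> level (d - 1)" "mdeg n (mgcd g0 u) = max_overlap d u"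
    and "g \<in> level (d - 1)" "mdeg n (mgcd g v) = max_overlap d v"
    and closest: "\<And>k m. k < n \<Longrightarrow> m < n \<Longrightarrow> g k < g0 k \<Longrightarrow> g0 m < g m \<Longrightarrow> v k \<le> g k \<and> g m \<le> v m"
    and below: "\<And>i. i < n \<Longrightarrow> v i < u i \<Longrightarrow> g i \<le> v i"
  shows "max_overlap d u \<le> max_overlap d v"
    and "max_overlap d u = max_overlap d v \<Longrightarrow> k < n \<Longrightarrow>
      min (g0 k) (u k) + g k = min (g k) (v k) + g0 k"
proof -
  have pointwise: "min (g0 k) (u k) + g k \<le> min (g k) (v k) + g0 k" if "k < n" for k
  proof (cases "g k \<le> v k")
    case False
    then have "u k \<le> v k" using below[OF that] by (meson not_le)
    moreover have "g k \<le> g0 k"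
    proof (rule ccontr)
      assume "\<not> g k \<le> g0 k"
      moreover obtain k' where "k' < n" "g k' < g0 k'"
        using mdeg_eq_ex_less[of g n g0] assms(2,4) level_mons calculation
        by (force simp: level_def)
      ultimately show False using closest[OF _ that] False by force
    qed
    ultimately show ?thesis using False by (simp add: min_def)
  qed (simp add: min_def)
  have sums: "(\<Sum>k<n. min (g0 k) (u k) + g k) = max_overlap d u + (d - 1)"
    "(\<Sum>k<n. min (g k) (v k) + g0 k) = max_overlap d v + (d - 1)"
    using assms(2-5) by (simp_all add: sum.distrib level_def mdeg_def mgcd_def)
  moreover have "(\<Sum>k<n. min (g0 k) (u k) + g k) \<le> (\<Sum>k<n. min (g k) (v k) + g0 k)"
    using pointwise by (intro sum_mono) simp
  ultimately show "max_overlap d u \<le> max_overlap d v" by simp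
  show "min (g0 k) (u k) + g k = min (g k) (v k) + g0 k"
    if "max_overlap d u = max_overlap d v" "k < n"
    using sum_mono_inv[of "\<lambda>k. min (g0 k) (u k) + g k" "{..<n}" "\<lambda>k. min (g k) (v k) + g0 k" k]
      sums pointwise that by simp
qed

lemma exchange_descent:
  assumes u: "u \<in> level d" and v: "v \<in> level d"
    and g0: "g0 \<in> level (d - 1)" "mdeg n (mgcd g0 u) = max_overlap d v"
    and g: "g \<in> level (d - 1)"
    and i0: "i0 < n" "\<forall>i<i0. u i = v i" "v i0 < u i0"
    and j: "j < n" "u j < v j" "g0 j < g j"
    and k: "k < n" "k \<noteq> i0" "g k < g0 k" "v k < u k"
  shows "\<exists>u'\<in>level d. precedes d u' v \<and> excess n u' v < excess n u v \<and> (\<forall>i. v i < u' i \<longrightarrow> v i < u i)"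
proof (intro bexI conjI)
  have "k \<noteq> j" using j(2) k(4) by auto
  have "exch k j g0 \<in> level (d - 1)"
    using level_exchange[OF g0(1) g k(1) j(1) k(3) j(3)] .
  then have "max_overlap d v \<le> max_overlap d (exch k j u)"
    using max_overlap_exch_exch[where g = g0 and a = u, OF _ j(1) k(1)] g0(2) k(3,4) by simp
  moreover have "i0 < k" "i0 < j"
    using i0 k(2,4) lexgt_exch(1)[OF i0 j(2)] by (metis linorder_neqE_nat less_irrefl)+
  then have "lexgt n (exch k j u) v"
    unfolding lexgt_def using i0 \<open>k \<noteq> j\<close> by (intro exI[of _ i0]) (auto simp: exch_apply)
  ultimately show "precedes d (exch k j u) v" by (simp add: precedes_def)
  show "excess n (exch k j u) v < excess n u v"
    using excess_exch_less[OF j(1) k(1) j(2) k(4)] .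
  show "\<forall>i. v i < exch k j u i \<longrightarrow> v i < u i"
    using j(2) k(4) \<open>k \<noteq> j\<close> by (auto simp: exch_apply)
  show "exch k j u \<in> level d"
    using level_exchange[OF u v k(1) j(1) k(4) j(2)] .
qed

lemma exchange_step_tight:
  assumes u: "u \<in> level d" and v: "v \<in> level d"
    and g0: "g0 \<in> level (d - 1)" "mdeg n (mgcd g0 u) = max_overlap d v"
    and g: "g \<in> level (d - 1)" "mdeg n (mgcd g v) = max_overlap d v"
    and closest: "\<And>k m. k < n \<Longrightarrow> m < n \<Longrightarrow> g k < g0 k \<Longrightarrow> g0 m < g m \<Longrightarrow> v k \<le> g k \<and> g m \<le> v m"
    and below: "\<And>i. i < n \<Longrightarrow> v i < u i \<Longrightarrow> g i \<le> v i"
    and tight: "\<And>k. k < n \<Longrightarrow> min (g0 k) (u k) + g k = min (g k) (v k) + g0 k"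
    and i0: "i0 < n" "\<forall>i<i0. u i = v i" "v i0 < u i0"
    and j: "j < n" "u j < v j" "v j \<le> g j"
  shows "(exch j i0 v \<in> level d \<and> precedes d (exch j i0 v) v)
    \<or> (\<exists>u'\<in>level d. precedes d u' v \<and> excess n u' v < excess n u v \<and> (\<forall>i. v i < u' i \<longrightarrow> v i < u i))"
proof -
  have "g0 j < g j"
    using tight[OF j(1)] j(2,3) by (auto simp: min_def split: if_splits)
  moreover obtain k where k: "k < n" "g k < g0 k"
    using mdeg_eq_ex_less[of g n g0] g(1) g0(1) level_mons calculation by (force simp: level_def)
  show ?thesis
  proof (cases "g i0 < g0 i0")
    case True
    have "exch j i0 g \<in> level (d - 1)"
      using level_exchange[OF g(1) g0(1) j(1) i0(1) \<open>g0 j < g j\<close> True] .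
    then have "max_overlap d v \<le> max_overlap d (exch j i0 v)"
      using max_overlap_exch_exch[where g = g and a = v, OF _ i0(1) j(1)] g(2) \<open>g0 j < g j\<close> j(2) by simp
    then show ?thesis using precedes_lex_exchange[OF u v i0 j(1,2)] by blast
  next
    case False
    have "g k = v k"
    proof (rule ccontr)
      assume "g k \<noteq> v k"
      then have "v k < g k" using closest[OF k(1) j(1) k(2) \<open>g0 j < g j\<close>] by simp
      then show False
        using tight[OF k(1)] below[OF k(1)] k(2) by (auto simp: min_def split: if_splits)
    qed
    then have "v k < u k"
      using tight[OF k(1)] k(2) by (auto simp: min_def split: if_splits)
    moreover have "k \<noteq> i0" using False k(2) by auto
    ultimately show ?thesis
      using exchange_descent[OF u v g0 g(1) i0 j(1,2) \<open>g0 j < g j\<close> k(1)] k(2) by blast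
  qed
qed

lemma exchange_step_empty_lower:
  assumes "level (d - 1) = {}" "u \<in> level d" "v \<in> level d" "precedes d u v"
  shows "\<exists>i<n. \<exists>j<n. v i < u i \<and> exch j i v \<in> level d \<and> precedes d (exch j i v) v"
proof -
  have "lexgt n u v"
    using assms(1,4) max_overlap_empty by (simp add: precedes_def lifted_def)
  then obtain i0 where i0: "i0 < n" "\<forall>i<i0. u i = v i" "v i0 < u i0"
    unfolding lexgt_def by blast
  moreover obtain j where j: "j < n" "u j < v j"
    using mdeg_eq_ex_less[of u n v] assms(2,3) level_mons i0(3) by (force simp: level_def)
  ultimately have "exch j i0 v \<in> level d \<and> precedes d (exch j i0 v) v"
    using precedes_lex_exchange[OF assms(2,3) i0 j] max_overlap_empty[OF assms(1)] by simp
  then show ?thesis using i0(1,3) j(1) by blast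
qed

lemma exchange_step_dominated:
  assumes u: "u \<in> level d" "precedes d u v" and v: "v \<in> level d" "v \<notin> lifted d"
    and g0: "g0 \<in> level (d - 1)" "mdeg n (mgcd g0 u) = max_overlap d u"
    and g: "g \<in> level (d - 1)" "mdeg n (mgcd g v) = max_overlap d v"
    and closest: "\<And>k m. k < n \<Longrightarrow> m < n \<Longrightarrow> g k < g0 k \<Longrightarrow> g0 m < g m \<Longrightarrow> v k \<le> g k \<and> g m \<le> v m"
    and below: "\<And>i. i < n \<Longrightarrow> v i < u i \<Longrightarrow> g i \<le> v i"
  shows "(\<exists>i<n. \<exists>j<n. v i < u i \<and> exch j i v \<in> level d \<and> precedes d (exch j i v) v)
    \<or> (\<exists>u'\<in>level d. precedes d u' v \<and> excess n u' v < excess n u v \<and> (\<forall>i. v i < u' i \<longrightarrow> v i < u i))"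
proof -
  have "max_overlap d u \<le> max_overlap d v"
    using max_overlap_tight(1)[OF u(1) g0 g closest below] .
  moreover then have "u \<notin> lifted d"
    using lifted_max_overlap_less[OF _ v] by fastforce
  ultimately have eq: "max_overlap d u = max_overlap d v" and "lexgt n u v"
    using u(2) by (auto simp: precedes_def)
  then obtain i0 where i0: "i0 < n" "\<forall>i<i0. u i = v i" "v i0 < u i0"
    unfolding lexgt_def by blast
  obtain j where j: "j < n" "u j < v j"
    using mdeg_eq_ex_less[of u n v] u(1) v(1) level_mons i0(3) by (force simp: level_def)
  have "(exch j i0 v \<in> level d \<and> precedes d (exch j i0 v) v)
    \<or> (\<exists>u'\<in>level d. precedes d u' v \<and> excess n u' v < excess n u v \<and> (\<forall>i. v i < u' i \<longrightarrow> v i < u i))"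
  proof (cases "g j < v j")
    case True
    moreover have "i0 \<noteq> j" using lexgt_exch(1)[OF i0 j(2)] by simp
    moreover have "\<not> v i0 < g i0" using below[OF i0(1,3)] by simp
    ultimately have "max_overlap d v \<le> max_overlap d (exch j i0 v)"
      using max_overlap_exch_right[OF g i0(1) j(1)] by fastforce
    then show ?thesis using precedes_lex_exchange[OF u(1) v(1) i0 j] by simp
  next
    case False
    have "mdeg n (mgcd g0 u) = max_overlap d v" using g0(2) eq by simp
    with False show ?thesis
      using exchange_step_tight[OF u(1) v(1) g0(1) _ g closest below
          max_overlap_tight(2)[OF u(1) g0 g closest below eq] i0 j] by simp
  qed
  then show ?thesis using i0(1,3) j(1) by blast
qed

lemma exchange_step:
  assumes "1 \<le> d" and v: "v \<in> level d" "v \<notin> lifted d" and u: "u \<in> level d" "precedes d u v"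
  shows "(\<exists>i<n. \<exists>j<n. v i < u i \<and> exch j i v \<in> level d \<and> precedes d (exch j i v) v)
    \<or> (\<exists>u'\<in>level d. precedes d u' v \<and> excess n u' v < excess n u v \<and> (\<forall>i. v i < u' i \<longrightarrow> v i < u i))"
proof (cases "level (d - 1) = {}")
  case True
  then show ?thesis using exchange_step_empty_lower u v(1) by blast
next
  case False
  then obtain g0 where g0: "g0 \<in> level (d - 1)" "mdeg n (mgcd g0 u) = max_overlap d u"
    using max_overlap_attained by blast
  obtain g where g: "g \<in> level (d - 1)" "mdeg n (mgcd g v) = max_overlap d v"
    and closest: "\<And>k m. k < n \<Longrightarrow> m < n \<Longrightarrow> g k < g0 k \<Longrightarrow> g0 m < g m \<Longrightarrow> v k \<le> g k \<and> g m \<le> v m"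
    using closest_max_overlap_divisor[OF g0(1)] by blast
  show ?thesis
  proof (cases "\<exists>i<n. v i < u i \<and> v i < g i")
    case True
    then obtain i where i: "i < n" "v i < u i" "v i < g i" by blast
    then obtain j where "j < n" "exch j i v \<in> level d" "max_overlap d v < max_overlap d (exch j i v)"
      using max_overlap_exchange_increase[OF assms(1) v(1) g] by blast
    then show ?thesis using i unfolding precedes_def by blast
  next
    case False
    then have "\<And>i. i < n \<Longrightarrow> v i < u i \<Longrightarrow> g i \<le> v i" by (meson not_le)
    then show ?thesis using exchange_step_dominated[OF u v g0 g closest] by blast
  qed
qed

lemma exchange_towards_earlier:
  assumes "1 \<le> d" "v \<in> level d" "v \<notin> lifted d" "u \<in> level d" "precedes d u v"
  shows "\<exists>i<n. \<exists>j<n. v i < u i \<and> exch j i v \<in> level d \<and> precedes d (exch j i v) v"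
  using assms(4,5)
proof (induction "excess n u v" arbitrary: u rule: less_induct)
  case less
  from exchange_step[OF assms(1-3) less.prems] show ?case
    using less.hyps by blast
qed

section \<open>The order of the generators\<close>

definition lex_key :: "monomial \<Rightarrow> int list" where
  "lex_key a = map (\<lambda>i. - int (a i)) [0..<n]"

(* Negated so that larger overlaps and lexicographically larger monomials come first. *)
definition key :: "monomial \<Rightarrow> nat \<times> int \<times> int list" where
  "key a = (mdeg n a, - int (max_overlap (mdeg n a) a), lex_key a)"

lemma lex_key_less_iff: "lex_key u < lex_key v \<longleftrightarrow> lexgt n u v"
proof -
  have take: "take i (lex_key a) = map (\<lambda>i. - int (a i)) [0..<i]" if "i \<le> n" for i a
    unfolding lex_key_def using that by (simp add: take_map)
  have "lex_key u < lex_key v \<longleftrightarrow>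
      (\<exists>i<n. take i (lex_key u) = take i (lex_key v) \<and> lex_key u ! i < lex_key v ! i)"
    unfolding list_less_def lexord_take_index_conv by (simp add: lex_key_def)
  also have "\<dots> \<longleftrightarrow> (\<exists>i<n. (\<forall>k<i. u k = v k) \<and> v i < u i)"
  proof (intro ex_cong1 conj_cong refl)
    fix i assume "i < n"
    then show "take i (lex_key u) = take i (lex_key v) \<longleftrightarrow> (\<forall>k<i. u k = v k)"
      by (auto simp: take atLeast0LessThan)
    show "lex_key u ! i < lex_key v ! i \<longleftrightarrow> v i < u i"
      using \<open>i < n\<close> by (simp add: lex_key_def)
  qed
  finally show ?thesis unfolding lexgt_def .
qed

lemma inj_on_key: "inj_on key (mons n)"
proof (rule inj_onI, rule ext)
  fix a b t assume "a \<in> mons n" "b \<in> mons n" "key a = key b"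
  then show "a t = b t"
    using nth_map_upt[of t n 0 "\<lambda>i. - int (a i)"] nth_map_upt[of t n 0 "\<lambda>i. - int (b i)"]
    by (cases "t < n") (auto simp: key_def lex_key_def mons_def)
qed

lemma key_less_same_mdeg:
  assumes "mdeg n u = d" "mdeg n v = d"
  shows "key u < key v \<longleftrightarrow>
    max_overlap d v < max_overlap d u \<or> (max_overlap d u = max_overlap d v \<and> lexgt n u v)"
  using assms by (auto simp: key_def less_prod_def' lex_key_less_iff)

lemma gens_mdeg_pos:
  assumes "v \<in> gens M" "b \<in> gens M" "b \<noteq> v"
  shows "1 \<le> mdeg n v"
proof (rule ccontr)
  assume "\<not> 1 \<le> mdeg n v"
  then have "v k = 0" for k
    using coord_le_mdeg[of k n v] assms(1) M_mons by (cases "k < n") (auto simp: gens_def mons_def)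
  then have "mdvd v b" by (simp add: mdvd_def)
  then show False using assms unfolding gens_def by blast
qed

lemma precedes_gens_below:
  assumes "1 \<le> d" "v \<in> level d" "y \<in> level d" "precedes d y v"
  obtains c where "c \<in> gens M" "key c < key v" "mdvd c y"
proof (cases "y \<in> lifted d")
  case True
  then obtain g where g: "g \<in> level (d - 1)" "mdvd g y"
    unfolding lifted_def by blast
  then obtain c where c: "c \<in> gens M" "mdvd c g"
    using gens_below by (auto simp: level_def)
  then have "mdeg n c < mdeg n v"
    using mdeg_mono[OF c(2), of n] g(1) assms(1,2) by (auto simp: level_def)
  then show ?thesis
    using that c mdvd_trans[OF c(2) g(2)] by (simp add: key_def)
next
  case False
  then have "y \<in> gens M" using gens_iff_level_not_lifted[OF assms(1)] assms(3) by blast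
  moreover have "key y < key v"
    using key_less_same_mdeg[of y d v] assms(2-4) False by (auto simp: level_def precedes_def)
  ultimately show ?thesis using that by simp
qed

lemma earlier_gen_precedes:
  assumes "v \<in> level d" "1 \<le> d" "b \<in> gens M" "key b < key v"
  obtains u where "u \<in> level d" "precedes d u v" "\<And>i. v i < u i \<Longrightarrow> v i < b i"
proof (cases "mdeg n b = d")
  case True
  then show ?thesis
    using that[of b] assms key_less_same_mdeg[of b d v]
    by (auto simp: level_def gens_def precedes_def)
next
  case False
  then have "mdeg n b < d"
    using assms(1,4) by (simp add: key_def level_def less_prod_def')
  define c where "c = (\<lambda>k. max (b k) (v k))"
  have "c \<in> mons n" "mdvd b c" "mdvd v c"
    using assms(1,3) M_mons by (auto simp: c_def mons_def mdvd_def level_def gens_def)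
  then obtain u where u: "mdvd b u" "mdvd u c" "mdeg n u = d"
    using mdvd_interpolate[of b c n d] mdeg_mono[of v c n] \<open>mdeg n b < d\<close> assms(1)
    by (auto simp: level_def)
  then have "u \<in> mons n" using \<open>c \<in> mons n\<close> mdvd_mons by blast
  moreover have "mdeg n b \<le> d - 1" "d - 1 \<le> mdeg n u"
    using \<open>mdeg n b < d\<close> u(3) by simp_all
  ultimately obtain g where g: "mdvd b g" "mdvd g u" "mdeg n g = d - 1"
    using mdvd_interpolate[OF u(1)] by blast
  have bM: "b \<in> M" using assms(3) by (simp add: gens_def)
  have "u \<in> lifted d"
    using M_upward[OF bM u(1) \<open>u \<in> mons n\<close>] M_upward[OF bM g(1) mdvd_mons[OF g(2) \<open>u \<in> mons n\<close>]]
      g u(3) by (auto simp: lifted_def level_def)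
  moreover have "v i < b i" if "v i < u i" for i
    using that u(2) by (auto simp: c_def mdvd_def max_def dest: spec[of _ i] split: if_splits)
  ultimately show ?thesis using that by (auto simp: lifted_def precedes_def)
qed

lemma gens_exchange:
  assumes v: "v \<in> gens M" and b: "b \<in> gens M" "key b < key v" "mdvd b (mmul w v)"
  shows "\<exists>i<n. 0 < w i \<and> (\<exists>c\<in>gens M. key c < key v \<and> mdvd c (mulvar i v))"
proof -
  define d where "d = mdeg n v"
  have d: "1 \<le> d" using gens_mdeg_pos[OF v b(1)] b(2) d_def by blast
  then have "v \<in> level d" "v \<notin> lifted d"
    using gens_iff_level_not_lifted[of d v] v d_def by auto
  moreover obtain u where "u \<in> level d" "precedes d u v" and u_b: "\<And>i. v i < u i \<Longrightarrow> v i < b i"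
    using earlier_gen_precedes[OF \<open>v \<in> level d\<close> d b(1,2)] by blast
  ultimately obtain i j where ij: "i < n" "v i < u i" "exch j i v \<in> level d" "precedes d (exch j i v) v"
    using exchange_towards_earlier[OF d] by blast
  then obtain c where "c \<in> gens M" "key c < key v" "mdvd c (mulvar i v)"
    using precedes_gens_below[OF d \<open>v \<in> level d\<close>] mdvd_exch_mulvar mdvd_trans by metis
  moreover have "0 < w i"
    using u_b[OF ij(2)] b(3) by (auto simp: mdvd_def mmul_def dest: spec[of _ i])
  ultimately show ?thesis using ij(1) by blast
qed

lemma linear_quotients: "linear_quotients n M"
  using finite_gens inj_on_subset[OF inj_on_key] gens_exchange
  by (rule linear_quotients_by_key) (auto simp: gens_def M_mons)

end

theorem theorem3p8:
  fixes n :: nat and M :: "monomial set"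
  assumes "monomial_ideal n M"
    and "componentwise_polymatroidal_sep n M"
  shows "linear_quotients n M"
proof -
  interpret componentwise_sep_ideal n M
    using assms by unfold_locales
  show ?thesis by (rule linear_quotients)
qed

end
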